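(* Let $b_{10}>0$, $b_{11}\ge0$, $c_{01}\ge0$, $c_{11}\ge0$, and define $\gamma'=\frac{c_{01}}{b_{10}}$, $\delta'=\frac{b_{10}-b_{11}+c_{11}-c_{01}}{b_{10}}$. Let $\mathcal{F}=\{(P_{11},t): P_{11}\in[0,1],\ P_{11}-1\le t\le P_{11}\}$ and $\mathcal{P}=\{(P_{11},t)\in\mathcal{F}: t>\gamma'+\delta'P_{11}\}$. If $c_{11}>b_{11}$, then $\mathcal{P}=\emptyset$.
   Context: Double binary causal classification: $P_{11}$ is the probability of the positive outcome under the positive treatment, $t=P_{11}-P_{10}$ the estimated individual treatment effect, $b_{ij}$ the benefit of outcome $i$ under treatment $j$ and $c_{ij}$ the cost of outcome $i$ under treatment $j$, normalized so that $c_{00}=c_{10}=0$, $b_{00}=b_{01}=0$. The cost-sensitive causal decision boundary is $t=\gamma'+\delta'P_{11}$ and $\mathcal{P}$ is the positive treatment set. *)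

theory Defs
  imports Complex_Main
begin

definition gamma' :: "real \<Rightarrow> real \<Rightarrow> real" where
  "gamma' b10 c01 = c01 / b10"

definition delta' :: "real \<Rightarrow> real \<Rightarrow> real \<Rightarrow> real \<Rightarrow> real" where
  "delta' b10 b11 c01 c11 = (b10 - b11 + c11 - c01) / b10"

definition feasible :: "(real \<times> real) set" where
  "feasible = {(p, t). 0 \<le> p \<and> p \<le> 1 \<and> p - 1 \<le> t \<and> t \<le> p}"

definition pos_set :: "real \<Rightarrow> real \<Rightarrow> real \<Rightarrow> real \<Rightarrow> (real \<times> real) set" where
  "pos_set b10 b11 c01 c11 =
     {(p, t) \<in> feasible. t > gamma' b10 c01 + delta' b10 b11 c01 c11 * p}"

end

theory Submission
  imports Defs
begin

(* The decision boundary exceeds the diagonal t = P11 by (c01 (1 - P11) + (c11 - b11) P11) / b10,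
   which is nonnegative on [0,1] once c11 >= b11; feasible points satisfy t <= P11, so none lies
   strictly above the boundary. *)

lemma decision_boundary_eq:
  assumes "b10 \<noteq> 0"
  shows "gamma' b10 c01 + delta' b10 b11 c01 c11 * p
           = p + (c01 * (1 - p) + (c11 - b11) * p) / b10"
  using assms unfolding gamma'_def delta'_def by (simp add: field_simps)

lemma diagonal_le_decision_boundary:
  assumes "b10 > 0" and "c01 \<ge> 0" and "c11 \<ge> b11" and "0 \<le> p" and "p \<le> 1"
  shows "p \<le> gamma' b10 c01 + delta' b10 b11 c01 c11 * p"
proof -
  have "c01 * (1 - p) + (c11 - b11) * p \<ge> 0"
    using assms by simp
  then have "(c01 * (1 - p) + (c11 - b11) * p) / b10 \<ge> 0"
    using \<open>b10 > 0\<close> by simp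
  then show ?thesis
    using decision_boundary_eq[of b10] \<open>b10 > 0\<close> by simp
qed

lemma pos_set_eq_empty_if_b11_le_c11:
  assumes "b10 > 0" and "c01 \<ge> 0" and "c11 \<ge> b11"
  shows "pos_set b10 b11 c01 c11 = {}"
  using diagonal_le_decision_boundary[OF assms]
  unfolding pos_set_def feasible_def by force

theorem corollary1:
  fixes b10 b11 c01 c11 :: real
  assumes "b10 > 0" and "b11 \<ge> 0" and "c01 \<ge> 0" and "c11 \<ge> 0"
    and "c11 > b11"
  shows "pos_set b10 b11 c01 c11 = {}"
  using assms by (simp add: pos_set_eq_empty_if_b11_le_c11)

end
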